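(* Let $A>0$, $\alpha>0$ and let $k\ge3$ be an integer such that \[ \frac{4A^{1/2}k^{1/2}\alpha}{\pi^2}+\frac{2A^{1/4}k^{1/4}\alpha^{1/2}}{\pi}\big(k^{1/2}+k^{-1/2}\big)+1\le k. \] Then for every $a$ with $1\le a\le k^{1/2}$, \[ \lambda_k(R^A_a,\alpha)\ge\lambda_k(S_k,\alpha). \]
   Context: For a bounded open set $\Omega\subset\mathbb{R}^2$ with Lipschitz boundary (possibly disconnected) and $\alpha>0$, $\lambda_1(\Omega,\alpha)\le\lambda_2(\Omega,\alpha)\le\cdots$ denote the eigenvalues, counted with multiplicity, of the Robin Laplacian $-\Delta u=\lambda u$, $\partial_\nu u+\alpha u=0$ on $\partial\Omega$ (defined via the form $\int_\Omega\nabla u\cdot\overline{\nabla v}+\alpha\int_{\partial\Omega}u\overline v$ on $H^1(\Omega)$). $R^A_a$ is a rectangle with side lengths $A^{1/2}a$ and $A^{1/2}/a$; $S_k$ is the disjoint union of $k$ equal squares of total area $A$. *)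

theory Defs
  imports "HOL-Analysis.Analysis"
begin

text \<open>Domains considered: a disjoint union of m copies of the closed rectangle
  [0,L1] x [0,L2] in the plane.  A function on the domain is represented as
  u :: nat => real*real => real, where u i is the function on the i-th copy (i < m).
  Trial functions are restrictions of C^1 functions on the whole plane, which are
  dense in H^1 of a Lipschitz domain (with continuous trace), so the min-max values
  below are the Robin eigenvalues defined through the H^1 form.\<close>

definition C1fun :: "(real \<times> real \<Rightarrow> real) \<Rightarrow> bool" where
  "C1fun f \<longleftrightarrow> (\<exists>D. continuous_on UNIV D \<and> (\<forall>x. (f has_derivative blinfun_apply (D x)) (at x)))"

definition grad_sq :: "(real \<times> real \<Rightarrow> real) \<Rightarrow> real \<times> real \<Rightarrow> real" where
  "grad_sq f x = (frechet_derivative f (at x) (1, 0))\<^sup>2 + (frechet_derivative f (at x) (0, 1))\<^sup>2"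

definition robin_form_rect :: "real \<Rightarrow> real \<Rightarrow> real \<Rightarrow> (real \<times> real \<Rightarrow> real) \<Rightarrow> real" where
  "robin_form_rect L1 L2 \<alpha> f =
     integral (cbox (0, 0) (L1, L2)) (grad_sq f)
     + \<alpha> * (integral {0..L1} (\<lambda>t. (f (t, 0))\<^sup>2 + (f (t, L2))\<^sup>2)
            + integral {0..L2} (\<lambda>t. (f (0, t))\<^sup>2 + (f (L1, t))\<^sup>2))"

definition l2sq_rect :: "real \<Rightarrow> real \<Rightarrow> (real \<times> real \<Rightarrow> real) \<Rightarrow> real" where
  "l2sq_rect L1 L2 f = integral (cbox (0, 0) (L1, L2)) (\<lambda>x. (f x)\<^sup>2)"

definition robin_eig :: "nat \<Rightarrow> real \<Rightarrow> real \<Rightarrow> real \<Rightarrow> nat \<Rightarrow> real" where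
  "robin_eig m L1 L2 \<alpha> k =
    (INF \<phi> \<in> {\<phi> :: nat \<Rightarrow> nat \<Rightarrow> real \<times> real \<Rightarrow> real.
                (\<forall>j<k. \<forall>i<m. C1fun (\<phi> j i)) \<and>
                (\<forall>c :: nat \<Rightarrow> real.
                   (\<forall>i<m. \<forall>x\<in>cbox (0, 0) (L1, L2). (\<Sum>j<k. c j * \<phi> j i x) = 0)
                   \<longrightarrow> (\<forall>j<k. c j = 0))}.
      (SUP c \<in> {c :: nat \<Rightarrow> real. \<exists>j<k. c j \<noteq> 0}.
         (\<Sum>i<m. robin_form_rect L1 L2 \<alpha> (\<lambda>x. \<Sum>j<k. c j * \<phi> j i x))
         / (\<Sum>i<m. l2sq_rect L1 L2 (\<lambda>x. \<Sum>j<k. c j * \<phi> j i x))))"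

definition robin_eig_rect :: "real \<Rightarrow> real \<Rightarrow> real \<Rightarrow> nat \<Rightarrow> real" where
  "robin_eig_rect A a \<alpha> k = robin_eig 1 (sqrt A * a) (sqrt A / a) \<alpha> k"

definition robin_eig_squares :: "real \<Rightarrow> nat \<Rightarrow> real \<Rightarrow> nat \<Rightarrow> real" where
  "robin_eig_squares A n \<alpha> k = robin_eig n (sqrt (A / n)) (sqrt (A / n)) \<alpha> k"

end

theory Submission
  imports Defs
begin

text \<open>
  Upper bound for \<open>S\<^sub>k\<close>: the \<open>k\<close> functions equal to \<open>1\<close> on one square and \<open>0\<close> on the others
  all have Rayleigh quotient \<open>\<alpha> perimeter / area = 4\<alpha>/s\<close>, \<open>s = (A/k)\<^sup>1\<^sup>/\<^sup>2\<close>, and so does every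
  combination of them, hence \<open>\<lambda>\<^sub>k(S\<^sub>k) \<le> 4\<alpha>/s\<close>.

  Lower bound for the rectangle: cut it into a \<open>P \<times> Q\<close> grid with \<open>P Q < k\<close>. Any \<open>k\<close> trial
  functions have a nontrivial combination with mean zero on every cell, and on a cell of sides
  \<open>l\<^sub>1, l\<^sub>2\<close> the Neumann Poincare inequality (from the one-dimensional Wirtinger inequalities)
  bounds its Rayleigh quotient below by \<open>min (\<pi>/l\<^sub>1)\<^sup>2 (\<pi>/l\<^sub>2)\<^sup>2\<close>; the Robin boundary term is
  nonnegative. Taking \<open>P, Q\<close> as the ceilings of \<open>L\<^sub>i r/\<pi>\<close> with \<open>r\<^sup>2 = 4\<alpha>/s\<close>, the condition
  \<open>P Q < k\<close> follows from \<open>(X a + 1)(X/a + 1) \<le> k\<close>, \<open>X = 2 A\<^sup>1\<^sup>/\<^sup>4 k\<^sup>1\<^sup>/\<^sup>4 \<alpha>\<^sup>1\<^sup>/\<^sup>2/\<pi>\<close>, which is the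
  hypothesis because \<open>a + 1/a\<close> increases on \<open>[1, k\<^sup>1\<^sup>/\<^sup>2]\<close>.
\<close>

section \<open>One-dimensional Wirtinger inequalities\<close>

lemma wirtinger_dirichlet_shifted:
  fixes g g' :: "real \<Rightarrow> real"
  assumes ab: "a < b" and \<delta>: "\<delta> > 0"
    and g': "\<And>x. x \<in> {a..b} \<Longrightarrow> (g has_real_derivative g' x) (at x within {a..b})"
    and g'_cont: "continuous_on {a..b} g'" and "g a = 0" and "g b = 0"
  shows "(pi / (b - a + 2 * \<delta>))\<^sup>2 * integral {a..b} (\<lambda>x. (g x)\<^sup>2) \<le> integral {a..b} (\<lambda>x. (g' x)\<^sup>2)"
proof -
  define c where "c = pi / (b - a + 2 * \<delta>)"
  define \<theta> where "\<theta> x = c * (x - a + \<delta>)" for x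
  have "c > 0" using ab \<delta> by (simp add: c_def)
  have sin_pos: "sin (\<theta> x) > 0" if "x \<in> {a..b}" for x
  proof (rule sin_gt_zero)
    show "0 < \<theta> x" using that \<open>c > 0\<close> \<delta> by (simp add: \<theta>_def)
    have "\<theta> x < c * (b - a + 2 * \<delta>)" using that \<open>c > 0\<close> \<delta> by (simp add: \<theta>_def)
    also have "\<dots> = pi" using ab \<delta> by (simp add: c_def)
    finally show "\<theta> x < pi" .
  qed
  \<comment> \<open>Picone's identity with the weight \<open>h = c cot \<theta>\<close>; the shift \<open>\<delta>\<close> keeps \<open>h\<close> bounded on \<open>[a,b]\<close>.\<close>
  define h where "h x = c * cos (\<theta> x) / sin (\<theta> x)" for x
  define P' where "P' x = (g' x)\<^sup>2 - c\<^sup>2 * (g x)\<^sup>2 - (g' x - h x * g x)\<^sup>2" for x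
  have g_cont: "continuous_on {a..b} g"
    using g' by (rule DERIV_continuous_on)
  have h_cont: "continuous_on {a..b} h"
    using sin_pos unfolding h_def \<theta>_def by (auto intro!: continuous_intros simp: less_imp_neq[symmetric])
  have "((\<lambda>x. h x * (g x)\<^sup>2) has_real_derivative P' x) (at x within {a..b})" if "x \<in> {a..b}" for x
    using sin_pos[OF that] g'[OF that] unfolding P'_def h_def \<theta>_def
    by (auto intro!: derivative_eq_intros simp: field_simps power2_eq_square)
  then have "(P' has_integral (h b * (g b)\<^sup>2 - h a * (g a)\<^sup>2)) {a..b}"
    using ab by (intro fundamental_theorem_of_calculus)
      (auto simp: has_real_derivative_iff_has_vector_derivative)
  then have "integral {a..b} P' = 0" using assms by (simp add: integral_unique)
  moreover have "integral {a..b} P' = integral {a..b} (\<lambda>x. (g' x)\<^sup>2) - c\<^sup>2 * integral {a..b} (\<lambda>x. (g x)\<^sup>2)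
      - integral {a..b} (\<lambda>x. (g' x - h x * g x)\<^sup>2)"
    unfolding P'_def
    by (simp add: integral_diff integrable_diff integrable_continuous_real continuous_intros
        g_cont g'_cont h_cont)
  moreover have "integral {a..b} (\<lambda>x. (g' x - h x * g x)\<^sup>2) \<ge> 0"
    by (intro integral_nonneg integrable_continuous_real continuous_intros g_cont g'_cont h_cont) auto
  ultimately show ?thesis by (simp add: c_def)
qed

lemma wirtinger_dirichlet:
  fixes g g' :: "real \<Rightarrow> real"
  assumes ab: "a < b"
    and g': "\<And>x. x \<in> {a..b} \<Longrightarrow> (g has_real_derivative g' x) (at x within {a..b})"
    and g'_cont: "continuous_on {a..b} g'" and ga: "g a = 0" and gb: "g b = 0"
  shows "(pi / (b - a))\<^sup>2 * integral {a..b} (\<lambda>x. (g x)\<^sup>2) \<le> integral {a..b} (\<lambda>x. (g' x)\<^sup>2)"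
proof (rule tendsto_le[of "at_right 0"])
  show "((\<lambda>\<delta>. (pi / (b - a + 2 * \<delta>))\<^sup>2 * integral {a..b} (\<lambda>x. (g x)\<^sup>2))
      \<longlongrightarrow> (pi / (b - a))\<^sup>2 * integral {a..b} (\<lambda>x. (g x)\<^sup>2)) (at_right 0)"
    using ab by (auto intro!: tendsto_eq_intros)
  show "\<forall>\<^sub>F \<delta> in at_right 0. (pi / (b - a + 2 * \<delta>))\<^sup>2 * integral {a..b} (\<lambda>x. (g x)\<^sup>2)
      \<le> integral {a..b} (\<lambda>x. (g' x)\<^sup>2)"
    using wirtinger_dirichlet_shifted[OF ab _ g' g'_cont ga gb] eventually_at_right_less[of 0]
    by (auto elim!: eventually_mono)
qed auto

lemma integral_square_deviation:
  fixes f :: "real \<Rightarrow> real"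
  assumes ab: "a < b" and f: "continuous_on {a..b} f"
  shows "integral {a..b} (\<lambda>x. (f x - integral {a..b} f / (b - a))\<^sup>2)
       = integral {a..b} (\<lambda>x. (f x)\<^sup>2) - (integral {a..b} f)\<^sup>2 / (b - a)"
proof -
  define m where "m = integral {a..b} f / (b - a)"
  have "(\<lambda>x. (f x - m)\<^sup>2) = (\<lambda>x. (f x)\<^sup>2 - 2 * m * f x + m\<^sup>2)"
    by (auto simp: power2_eq_square algebra_simps)
  then have "integral {a..b} (\<lambda>x. (f x - m)\<^sup>2) = integral {a..b} (\<lambda>x. (f x)\<^sup>2 - 2 * m * f x + m\<^sup>2)"
    by simp
  also have "\<dots> = integral {a..b} (\<lambda>x. (f x)\<^sup>2) - 2 * m * integral {a..b} f + m\<^sup>2 * (b - a)"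
    using ab by (simp add: integral_add integral_diff integrable_diff integrable_continuous_real
        continuous_intros f)
  also have "\<dots> = integral {a..b} (\<lambda>x. (f x)\<^sup>2) - m * integral {a..b} f"
    using ab by (simp add: m_def power2_eq_square)
  also have "\<dots> = integral {a..b} (\<lambda>x. (f x)\<^sup>2) - (integral {a..b} f)\<^sup>2 / (b - a)"
    by (simp add: m_def power2_eq_square)
  finally show ?thesis by (simp add: m_def)
qed

lemma square_integral_le:
  fixes f :: "real \<Rightarrow> real"
  assumes ab: "a < b" and f: "continuous_on {a..b} f"
  shows "(integral {a..b} f)\<^sup>2 \<le> (b - a) * integral {a..b} (\<lambda>x. (f x)\<^sup>2)"
proof -
  have "0 \<le> integral {a..b} (\<lambda>x. (f x - integral {a..b} f / (b - a))\<^sup>2)"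
    by (intro integral_nonneg integrable_continuous_real continuous_intros f) auto
  then have "0 \<le> integral {a..b} (\<lambda>x. (f x)\<^sup>2) - (integral {a..b} f)\<^sup>2 / (b - a)"
    by (simp add: integral_square_deviation[OF ab f])
  then show ?thesis using ab by (simp add: field_simps)
qed

lemma wirtinger_neumann_mean_zero:
  fixes f f' :: "real \<Rightarrow> real"
  assumes ab: "a < b"
    and f': "\<And>x. x \<in> {a..b} \<Longrightarrow> (f has_real_derivative f' x) (at x within {a..b})"
    and f'_cont: "continuous_on {a..b} f'" and mean: "integral {a..b} f = 0"
  shows "(pi / (b - a))\<^sup>2 * integral {a..b} (\<lambda>x. (f x)\<^sup>2) \<le> integral {a..b} (\<lambda>x. (f' x)\<^sup>2)"
proof -
  have f_cont: "continuous_on {a..b} f"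
    using f' by (rule DERIV_continuous_on)
  define F where "F x = integral {a..x} f" for x
  have F': "(F has_real_derivative f x) (at x within {a..b})" if "x \<in> {a..b}" for x
    unfolding F_def by (rule integral_has_real_derivative[OF f_cont that])
  have F_cont: "continuous_on {a..b} F"
    using F' by (rule DERIV_continuous_on)
  have "F a = 0" "F b = 0" using mean by (simp_all add: F_def)
  define t where "t = (pi / (b - a))\<^sup>2"
  define I where "I = integral {a..b} (\<lambda>x. (f x)\<^sup>2)"
  define X where "X = integral {a..b} (\<lambda>x. (F x)\<^sup>2)"
  define Y where "Y = integral {a..b} (\<lambda>x. (f' x)\<^sup>2)"
  have "t > 0" using ab by (simp add: t_def)
  have "t * X \<le> I"
    unfolding t_def X_def I_def by (rule wirtinger_dirichlet[OF ab F' f_cont \<open>F a = 0\<close> \<open>F b = 0\<close>])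
  \<comment> \<open>Integration by parts: \<open>I = - \<integral> F f'\<close>, as \<open>F f\<close> vanishes at both ends.\<close>
  have "((\<lambda>x. (f x)\<^sup>2 + F x * f' x) has_integral (F b * f b - F a * f a)) {a..b}"
    using ab F' f' by (intro fundamental_theorem_of_calculus)
      (auto intro!: derivative_eq_intros simp: has_real_derivative_iff_has_vector_derivative[symmetric]
        power2_eq_square)
  then have "I + integral {a..b} (\<lambda>x. F x * f' x) = 0"
    using \<open>F a = 0\<close> \<open>F b = 0\<close> unfolding I_def
    by (subst integral_add[symmetric])
      (auto simp: integral_unique integrable_continuous_real continuous_intros f_cont F_cont f'_cont)
  moreover have am_gm: "- 2 * (F x * f' x) \<le> t * (F x)\<^sup>2 + (f' x)\<^sup>2 / t" for x
  proof -
    have "0 \<le> (t * F x + f' x)\<^sup>2 / t" using \<open>t > 0\<close> by simp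
    also have "\<dots> = t * (F x)\<^sup>2 + 2 * (F x * f' x) + (f' x)\<^sup>2 / t"
      using \<open>t > 0\<close> by (simp add: power2_eq_square field_simps)
    finally show ?thesis by simp
  qed
  then have "integral {a..b} (\<lambda>x. - 2 * (F x * f' x)) \<le> integral {a..b} (\<lambda>x. t * (F x)\<^sup>2 + (f' x)\<^sup>2 / t)"
    using \<open>t > 0\<close> by (intro integral_le integrable_continuous_real continuous_intros F_cont f'_cont am_gm) auto
  ultimately have "2 * I \<le> t * X + Y / t"
    using \<open>t > 0\<close>
    by (simp add: X_def Y_def integral_add integrable_continuous_real continuous_intros F_cont f'_cont)
  then have "I \<le> Y / t" using \<open>t * X \<le> I\<close> by linarith
  then have "t * I \<le> Y" using \<open>t > 0\<close> by (simp add: field_simps)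
  then show ?thesis by (simp add: t_def I_def Y_def)
qed

lemma wirtinger_neumann:
  fixes g g' :: "real \<Rightarrow> real"
  assumes ab: "a < b"
    and g': "\<And>x. x \<in> {a..b} \<Longrightarrow> (g has_real_derivative g' x) (at x within {a..b})"
    and g'_cont: "continuous_on {a..b} g'"
  shows "(pi / (b - a))\<^sup>2 * (integral {a..b} (\<lambda>x. (g x)\<^sup>2) - (integral {a..b} g)\<^sup>2 / (b - a))
       \<le> integral {a..b} (\<lambda>x. (g' x)\<^sup>2)"
proof -
  have g_cont: "continuous_on {a..b} g"
    using g' by (rule DERIV_continuous_on)
  define m where "m = integral {a..b} g / (b - a)"
  have "integral {a..b} (\<lambda>x. g x - m) = 0"
    using ab by (simp add: integral_diff integrable_continuous_real g_cont m_def)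
  then have "(pi / (b - a))\<^sup>2 * integral {a..b} (\<lambda>x. (g x - m)\<^sup>2) \<le> integral {a..b} (\<lambda>x. (g' x)\<^sup>2)"
    using ab g' g'_cont by (intro wirtinger_neumann_mean_zero) (auto intro!: derivative_eq_intros)
  then show ?thesis unfolding m_def integral_square_deviation[OF ab g_cont] .
qed

section \<open>Poincare inequality on rectangles and grids\<close>

lemma C1fun_has_derivative: "C1fun u \<Longrightarrow> (u has_derivative frechet_derivative u (at x)) (at x)"
  unfolding C1fun_def by (metis frechet_derivative_at)

lemma C1fun_continuous: "C1fun u \<Longrightarrow> continuous_on S u"
  unfolding C1fun_def
  by (meson has_derivative_continuous continuous_at_imp_continuous_on continuous_on_subset top_greatest)

lemma continuous_on_frechet_derivative:
  assumes "C1fun u"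
  shows "continuous_on S (\<lambda>p. frechet_derivative u (at p) v)"
proof -
  obtain D where "continuous_on UNIV D" and D: "\<And>x. (u has_derivative blinfun_apply (D x)) (at x)"
    using assms unfolding C1fun_def by blast
  moreover have "frechet_derivative u (at x) = blinfun_apply (D x)" for x
    using frechet_derivative_at[OF D] by simp
  ultimately show ?thesis by (auto intro!: continuous_intros intro: continuous_on_subset)
qed

lemma continuous_on_grad_sq: "C1fun u \<Longrightarrow> continuous_on S (grad_sq u)"
  unfolding grad_sq_def[abs_def] by (intro continuous_intros continuous_on_frechet_derivative)

lemma C1fun_has_real_derivative_line:
  assumes "C1fun u"
  shows "((\<lambda>t. u (p + t *\<^sub>R v)) has_real_derivative frechet_derivative u (at (p + s *\<^sub>R v)) v) (at s)"
proof -
  note D = C1fun_has_derivative[OF assms]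
  have "((\<lambda>t. p + t *\<^sub>R v) has_derivative (\<lambda>h. h *\<^sub>R v)) (at s)"
    by (auto intro!: derivative_eq_intros)
  from has_derivative_compose[OF this D]
  have "((\<lambda>t. u (p + t *\<^sub>R v)) has_derivative (\<lambda>h. frechet_derivative u (at (p + s *\<^sub>R v)) (h *\<^sub>R v))) (at s)" .
  moreover have "frechet_derivative u (at (p + s *\<^sub>R v)) (h *\<^sub>R v) = frechet_derivative u (at (p + s *\<^sub>R v)) v * h"
    for h
    using linear.scaleR[OF has_derivative_linear[OF D]] by simp
  ultimately show ?thesis by (simp add: has_field_derivative_def)
qed

lemma C1fun_partial_derivatives:
  assumes "C1fun u"
  shows "((\<lambda>t. u (t, y)) has_real_derivative frechet_derivative u (at (x, y)) (1, 0)) (at x)"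
    and "((\<lambda>t. u (x, t)) has_real_derivative frechet_derivative u (at (x, y)) (0, 1)) (at y)"
  using C1fun_has_real_derivative_line[OF assms, of "(0, y)" "(1, 0)" x]
    C1fun_has_real_derivative_line[OF assms, of "(x, 0)" "(0, 1)" y]
  by simp_all

lemma C1fun_lincomb:
  fixes \<phi> :: "nat \<Rightarrow> real \<times> real \<Rightarrow> real"
  assumes "\<And>j. j < k \<Longrightarrow> C1fun (\<phi> j)"
  shows "C1fun (\<lambda>x. \<Sum>j<k. c j * \<phi> j x)"
proof -
  obtain D where D_cont: "\<And>j. j < k \<Longrightarrow> continuous_on UNIV (D j)"
    and D: "\<And>j x. j < k \<Longrightarrow> (\<phi> j has_derivative blinfun_apply (D j x)) (at x)"
    using assms unfolding C1fun_def by metis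
  have "((\<lambda>x. \<Sum>j<k. c j * \<phi> j x) has_derivative blinfun_apply (\<Sum>j<k. c j *\<^sub>R D j x)) (at x)" for x
  proof -
    have "((\<lambda>x. \<Sum>j<k. c j * \<phi> j x) has_derivative (\<lambda>h. \<Sum>j<k. c j * blinfun_apply (D j x) h)) (at x)"
      using D by (intro has_derivative_sum has_derivative_mult_right) auto
    moreover have "blinfun_apply (\<Sum>j<k. c j *\<^sub>R D j x) = (\<lambda>h. \<Sum>j<k. c j * blinfun_apply (D j x) h)"
      by (auto simp: fun_eq_iff blinfun.sum_left blinfun.scaleR_left)
    ultimately show ?thesis by simp
  qed
  moreover have "continuous_on UNIV (\<lambda>x. \<Sum>j<k. c j *\<^sub>R D j x)"
    using D_cont by (intro continuous_intros) auto
  ultimately show ?thesis unfolding C1fun_def by blast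
qed

lemma frechet_derivative_lincomb:
  fixes \<phi> :: "nat \<Rightarrow> real \<times> real \<Rightarrow> real"
  assumes "\<And>j. j < k \<Longrightarrow> C1fun (\<phi> j)"
  shows "frechet_derivative (\<lambda>x. \<Sum>j<k. c j * \<phi> j x) (at p) v
       = (\<Sum>j<k. c j * frechet_derivative (\<phi> j) (at p) v)"
proof -
  have "((\<lambda>x. \<Sum>j<k. c j * \<phi> j x) has_derivative (\<lambda>v. \<Sum>j<k. c j * frechet_derivative (\<phi> j) (at p) v)) (at p)"
  proof (intro has_derivative_sum has_derivative_mult_right)
    fix j assume "j \<in> {..<k}"
    then show "(\<phi> j has_derivative frechet_derivative (\<phi> j) (at p)) (at p)"
      by (simp add: C1fun_has_derivative assms)
  qed
  then show ?thesis by (simp add: frechet_derivative_at[symmetric])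
qed

lemma C1fun_const: "C1fun (\<lambda>x. a)"
  unfolding C1fun_def by (intro exI[of _ "\<lambda>x. 0"]) (auto intro!: continuous_intros derivative_eq_intros)

lemma C1fun_fst_power: "C1fun (\<lambda>x. (fst x) ^ n)"
  unfolding C1fun_def
proof (intro exI[of _ "\<lambda>x. (of_nat n * fst x ^ (n - 1)) *\<^sub>R fst_blinfun"] conjI allI)
  show "continuous_on UNIV (\<lambda>x::real \<times> real. (of_nat n * fst x ^ (n - 1)) *\<^sub>R fst_blinfun)"
    by (intro continuous_intros)
  show "((\<lambda>x. fst x ^ n) has_derivative blinfun_apply ((of_nat n * fst x ^ (n - 1)) *\<^sub>R fst_blinfun)) (at x)"
    for x :: "real \<times> real"
    by (auto intro!: derivative_eq_intros simp: blinfun.scaleR_left fun_eq_iff)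
qed

lemma continuous_on_slice_fst: "continuous_on UNIV g \<Longrightarrow> continuous_on S (\<lambda>t. g (t, y))"
  by (rule continuous_on_compose2[of UNIV g]) (auto intro!: continuous_intros)

lemma continuous_on_slice_snd: "continuous_on UNIV g \<Longrightarrow> continuous_on S (\<lambda>t. g (x, t))"
  by (rule continuous_on_compose2[of UNIV g]) (auto intro!: continuous_intros)

lemma integral_cbox_iterated:
  fixes F :: "real \<times> real \<Rightarrow> real"
  assumes "continuous_on UNIV F"
  shows "integral (cbox (a, c) (b, d)) F = integral {a..b} (\<lambda>x. integral {c..d} (\<lambda>y. F (x, y)))"
  using integral_prod_continuous[OF continuous_on_subset[OF assms], of a c b d]
  by (simp add: cbox_interval)

lemma continuous_on_integral_slice:
  fixes F :: "real \<times> real \<Rightarrow> real"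
  assumes "continuous_on UNIV F"
  shows "continuous_on S (\<lambda>x. integral {c..d} (\<lambda>y. F (x, y)))"
proof -
  have "continuous_on (S \<times> cbox c d) (\<lambda>(x, y). F (x, y))"
    using continuous_on_subset[OF assms] by (simp add: case_prod_eta)
  from integral_continuous_on_param[OF this] show ?thesis by (simp add: cbox_interval)
qed

lemma wirtinger_neumann_rectangle_vertical:
  assumes u: "C1fun u" and y: "y0 < y1"
  shows "(pi / (y1 - y0))\<^sup>2 * (integral (cbox (x0, y0) (x1, y1)) (\<lambda>p. (u p)\<^sup>2)
           - integral {x0..x1} (\<lambda>x. (integral {y0..y1} (\<lambda>y. u (x, y)))\<^sup>2) / (y1 - y0))
       \<le> integral (cbox (x0, y0) (x1, y1)) (\<lambda>p. (frechet_derivative u (at p) (0, 1))\<^sup>2)"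
proof -
  define uy where "uy p = frechet_derivative u (at p) (0, 1)" for p
  have u_cont: "continuous_on UNIV u" and uy_cont: "continuous_on UNIV uy"
    using u by (auto simp: uy_def intro: C1fun_continuous continuous_on_frechet_derivative)
  have slice: "(pi / (y1 - y0))\<^sup>2 * (integral {y0..y1} (\<lambda>y. (u (x, y))\<^sup>2) - (integral {y0..y1} (\<lambda>y. u (x, y)))\<^sup>2 / (y1 - y0))
      \<le> integral {y0..y1} (\<lambda>y. (uy (x, y))\<^sup>2)" for x
    using C1fun_partial_derivatives(2)[OF u] y uy_cont unfolding uy_def
    by (intro wirtinger_neumann) (auto intro: has_field_derivative_at_within continuous_on_slice_snd)
  have "integral {x0..x1} (\<lambda>x. (pi / (y1 - y0))\<^sup>2 * (integral {y0..y1} (\<lambda>y. (u (x, y))\<^sup>2)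
          - (integral {y0..y1} (\<lambda>y. u (x, y)))\<^sup>2 / (y1 - y0)))
      \<le> integral {x0..x1} (\<lambda>x. integral {y0..y1} (\<lambda>y. (uy (x, y))\<^sup>2))"
    using slice y by (intro integral_le integrable_continuous_real continuous_intros
        continuous_on_integral_slice u_cont uy_cont) auto
  moreover have "integral {x0..x1} (\<lambda>x. (pi / (y1 - y0))\<^sup>2 * (integral {y0..y1} (\<lambda>y. (u (x, y))\<^sup>2)
          - (integral {y0..y1} (\<lambda>y. u (x, y)))\<^sup>2 / (y1 - y0)))
      = (pi / (y1 - y0))\<^sup>2 * (integral {x0..x1} (\<lambda>x. integral {y0..y1} (\<lambda>y. (u (x, y))\<^sup>2))
          - integral {x0..x1} (\<lambda>x. (integral {y0..y1} (\<lambda>y. u (x, y)))\<^sup>2) / (y1 - y0))"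
  proof -
    have "continuous_on UNIV (\<lambda>p. (u p)\<^sup>2)" by (intro continuous_intros u_cont)
    then have "(\<lambda>x. integral {y0..y1} (\<lambda>y. (u (x, y))\<^sup>2)) integrable_on {x0..x1}"
      by (intro integrable_continuous_real continuous_on_integral_slice[of "\<lambda>p. (u p)\<^sup>2", simplified])
    moreover have "(\<lambda>x. (integral {y0..y1} (\<lambda>y. u (x, y)))\<^sup>2 / (y1 - y0)) integrable_on {x0..x1}"
      using y by (intro integrable_continuous_real continuous_intros continuous_on_integral_slice[OF u_cont]) auto
    ultimately show ?thesis by (simp add: integral_diff)
  qed
  ultimately show ?thesis using y
    by (simp add: uy_def[symmetric] integral_cbox_iterated continuous_intros u_cont uy_cont)
qed

lemma wirtinger_neumann_rectangle_horizontal: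
  assumes u: "C1fun u" and x: "x0 < x1" and y: "y0 < y1"
    and mean: "integral (cbox (x0, y0) (x1, y1)) u = 0"
  shows "(pi / (x1 - x0))\<^sup>2 * integral {x0..x1} (\<lambda>x. (integral {y0..y1} (\<lambda>y. u (x, y)))\<^sup>2)
       \<le> (y1 - y0) * integral (cbox (x0, y0) (x1, y1)) (\<lambda>p. (frechet_derivative u (at p) (1, 0))\<^sup>2)"
proof -
  define ux where "ux p = frechet_derivative u (at p) (1, 0)" for p
  define h where "h x = integral {y0..y1} (\<lambda>y. u (x, y))" for x
  define h' where "h' x = integral {y0..y1} (\<lambda>y. ux (x, y))" for x
  have u_cont: "continuous_on UNIV u" and ux_cont: "continuous_on UNIV ux"
    using u by (auto simp: ux_def intro: C1fun_continuous continuous_on_frechet_derivative)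
  have "(h has_real_derivative h' x) (at x within {x0..x1})" for x
  proof -
    have "(h has_real_derivative h' x) (at x within UNIV)"
      unfolding h_def h'_def
    proof (rule leibniz_rule_field_derivative[of UNIV y0 y1 "\<lambda>x y. u (x, y)" "\<lambda>x y. ux (x, y)",
          unfolded cbox_interval])
      show "((\<lambda>x. u (x, y)) has_real_derivative ux (x, y)) (at x within UNIV)" for x y
        using C1fun_partial_derivatives(1)[OF u] by (simp add: ux_def)
      show "(\<lambda>y. u (x, y)) integrable_on {y0..y1}" for x
        by (intro integrable_continuous_real continuous_on_slice_snd u_cont)
      show "continuous_on (UNIV \<times> {y0..y1}) (\<lambda>(x, y). ux (x, y))"
        by (simp add: case_prod_eta continuous_on_subset[OF ux_cont])
    qed auto
    then show ?thesis by (simp add: has_field_derivative_at_within)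
  qed
  moreover have "integral {x0..x1} h = 0"
    using mean by (simp add: h_def[abs_def] integral_cbox_iterated u_cont)
  ultimately have "(pi / (x1 - x0))\<^sup>2 * integral {x0..x1} (\<lambda>x. (h x)\<^sup>2) \<le> integral {x0..x1} (\<lambda>x. (h' x)\<^sup>2)"
    using x unfolding h'_def
    by (intro wirtinger_neumann_mean_zero continuous_on_integral_slice ux_cont) (auto simp: h'_def)
  also have "\<dots> \<le> integral {x0..x1} (\<lambda>x. (y1 - y0) * integral {y0..y1} (\<lambda>y. (ux (x, y))\<^sup>2))"
    unfolding h'_def using square_integral_le[OF y continuous_on_slice_snd[OF ux_cont]]
    by (intro integral_le integrable_continuous_real continuous_intros continuous_on_integral_slice ux_cont)
      auto
  also have "\<dots> = (y1 - y0) * integral (cbox (x0, y0) (x1, y1)) (\<lambda>p. (ux p)\<^sup>2)"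
    by (simp add: integral_cbox_iterated continuous_intros ux_cont)
  finally show ?thesis by (simp add: h_def ux_def)
qed

text \<open>Split \<open>\<integral>\<integral>u\<^sup>2\<close> into the deviation from the vertical averages \<open>h x = \<integral> u(x,y) dy\<close>,
  controlled by \<open>u\<^sub>y\<close>, and \<open>\<integral>h\<^sup>2 / l\<^sub>2\<close>, controlled by \<open>u\<^sub>x\<close> because \<open>h\<close> has mean zero.\<close>
lemma neumann_poincare_rectangle:
  assumes u: "C1fun u" and x: "x0 < x1" and y: "y0 < y1"
    and mean: "integral (cbox (x0, y0) (x1, y1)) u = 0"
    and \<mu>x: "\<mu> \<le> (pi / (x1 - x0))\<^sup>2" and \<mu>y: "\<mu> \<le> (pi / (y1 - y0))\<^sup>2"
  shows "\<mu> * integral (cbox (x0, y0) (x1, y1)) (\<lambda>p. (u p)\<^sup>2) \<le> integral (cbox (x0, y0) (x1, y1)) (grad_sq u)"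
proof -
  define l where "l = y1 - y0"
  define U where "U = integral (cbox (x0, y0) (x1, y1)) (\<lambda>p. (u p)\<^sup>2)"
  define H where "H = integral {x0..x1} (\<lambda>x. (integral {y0..y1} (\<lambda>y. u (x, y)))\<^sup>2)"
  define Gx where "Gx = integral (cbox (x0, y0) (x1, y1)) (\<lambda>p. (frechet_derivative u (at p) (1, 0))\<^sup>2)"
  define Gy where "Gy = integral (cbox (x0, y0) (x1, y1)) (\<lambda>p. (frechet_derivative u (at p) (0, 1))\<^sup>2)"
  have "l > 0" using y by (simp add: l_def)
  have u_cont: "continuous_on UNIV u" using u by (rule C1fun_continuous)
  have vertical: "(pi / l)\<^sup>2 * (U - H / l) \<le> Gy"
    unfolding l_def U_def H_def Gy_def by (rule wirtinger_neumann_rectangle_vertical[OF u y])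
  have horizontal: "(pi / (x1 - x0))\<^sup>2 * H \<le> l * Gx"
    unfolding l_def H_def Gx_def by (rule wirtinger_neumann_rectangle_horizontal[OF u x y mean])
  have "H \<le> integral {x0..x1} (\<lambda>x. l * integral {y0..y1} (\<lambda>y. (u (x, y))\<^sup>2))"
    unfolding H_def l_def using square_integral_le[OF y continuous_on_slice_snd[OF u_cont]]
    by (intro integral_le integrable_continuous_real continuous_intros continuous_on_integral_slice u_cont)
      auto
  also have "\<dots> = l * U" by (simp add: U_def integral_cbox_iterated continuous_intros u_cont)
  finally have "U - H / l \<ge> 0" using \<open>l > 0\<close> by (simp add: field_simps)
  have "H \<ge> 0" unfolding H_def
    by (intro integral_nonneg integrable_continuous_real continuous_intros continuous_on_integral_slice
        u_cont) auto
  have "\<mu> * U = \<mu> * (U - H / l) + \<mu> * H / l" using \<open>l > 0\<close> by (simp add: field_simps)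
  also have "\<dots> \<le> (pi / l)\<^sup>2 * (U - H / l) + (pi / (x1 - x0))\<^sup>2 * H / l"
    using \<mu>x \<mu>y \<open>U - H / l \<ge> 0\<close> \<open>H \<ge> 0\<close> \<open>l > 0\<close> unfolding l_def
    by (intro add_mono mult_right_mono divide_right_mono) auto
  also have "\<dots> \<le> Gy + Gx"
    using vertical horizontal \<open>l > 0\<close> by (intro add_mono) (simp_all add: pos_divide_le_eq mult.commute)
  also have "Gy + Gx = integral (cbox (x0, y0) (x1, y1)) (grad_sq u)"
    unfolding Gx_def Gy_def grad_sq_def[abs_def]
    by (subst integral_add[symmetric])
      (auto intro!: integrable_continuous continuous_intros continuous_on_frechet_derivative u simp: add.commute)
  finally show ?thesis by (simp add: U_def)
qed

lemma integral_split_uniform: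
  fixes f :: "real \<Rightarrow> real"
  assumes f: "continuous_on UNIV f" and l: "l \<ge> 0"
  shows "integral {a..a + real n * l} f = (\<Sum>i<n. integral {a + real i * l..a + real (Suc i) * l} f)"
proof (induction n)
  case (Suc n)
  have "integral {a..a + real n * l} f + integral {a + real n * l..a + real (Suc n) * l} f
      = integral {a..a + real (Suc n) * l} f"
    using l by (intro Henstock_Kurzweil_Integration.integral_combine integrable_continuous_real
        continuous_on_subset[OF f]) (auto simp: algebra_simps)
  then show ?case using Suc by simp
qed simp

definition grid_cell :: "real \<Rightarrow> real \<Rightarrow> nat \<Rightarrow> nat \<Rightarrow> (real \<times> real) set" where
  "grid_cell l1 l2 p q = cbox (real p * l1, real q * l2) (real (Suc p) * l1, real (Suc q) * l2)"

lemma integral_grid_sum: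
  fixes F :: "real \<times> real \<Rightarrow> real"
  assumes F: "continuous_on UNIV F" and "l1 \<ge> 0" and "l2 \<ge> 0"
  shows "integral (cbox (0, 0) (real P * l1, real Q * l2)) F
       = (\<Sum>p<P. \<Sum>q<Q. integral (grid_cell l1 l2 p q) F)"
proof -
  have "integral (cbox (0, 0) (real P * l1, real Q * l2)) F
      = integral {0..real P * l1} (\<lambda>x. \<Sum>q<Q. integral {real q * l2..real (Suc q) * l2} (\<lambda>y. F (x, y)))"
    using integral_split_uniform[OF continuous_on_slice_snd[OF F] \<open>l2 \<ge> 0\<close>, of 0 Q]
    by (simp add: integral_cbox_iterated[OF F])
  also have "\<dots> = (\<Sum>q<Q. integral {0..real P * l1} (\<lambda>x. integral {real q * l2..real (Suc q) * l2} (\<lambda>y. F (x, y))))"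
    by (intro integral_sum integrable_continuous_real continuous_on_integral_slice F) auto
  also have "\<dots> = (\<Sum>q<Q. \<Sum>p<P. integral (grid_cell l1 l2 p q) F)"
    using integral_split_uniform[OF continuous_on_integral_slice[OF F] \<open>l1 \<ge> 0\<close>, of 0 P]
    by (simp add: grid_cell_def integral_cbox_iterated[OF F])
  finally show ?thesis by (simp add: sum.swap[of _ "{..<Q}"])
qed

lemma neumann_poincare_grid:
  assumes u: "C1fun u" and l1: "l1 > 0" and l2: "l2 > 0"
    and \<mu>1: "\<mu> \<le> (pi / l1)\<^sup>2" and \<mu>2: "\<mu> \<le> (pi / l2)\<^sup>2"
    and mean: "\<And>p q. p < P \<Longrightarrow> q < Q \<Longrightarrow> integral (grid_cell l1 l2 p q) u = 0"
  shows "\<mu> * integral (cbox (0, 0) (real P * l1, real Q * l2)) (\<lambda>x. (u x)\<^sup>2)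
       \<le> integral (cbox (0, 0) (real P * l1, real Q * l2)) (grad_sq u)"
proof -
  have u_cont: "continuous_on UNIV u" using u by (rule C1fun_continuous)
  have "\<mu> * integral (cbox (0, 0) (real P * l1, real Q * l2)) (\<lambda>x. (u x)\<^sup>2)
      = (\<Sum>p<P. \<Sum>q<Q. \<mu> * integral (grid_cell l1 l2 p q) (\<lambda>x. (u x)\<^sup>2))"
    using l1 l2 by (simp add: integral_grid_sum continuous_intros u_cont sum_distrib_left)
  also have "\<dots> \<le> (\<Sum>p<P. \<Sum>q<Q. integral (grid_cell l1 l2 p q) (grad_sq u))"
    unfolding grid_cell_def
  proof (intro sum_mono neumann_poincare_rectangle[OF u])
    fix p q assume "p \<in> {..<P}" "q \<in> {..<Q}"
    then show "integral (cbox (real p * l1, real q * l2) (real (Suc p) * l1, real (Suc q) * l2)) u = 0"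
      using mean by (simp add: grid_cell_def)
  qed (use l1 l2 \<mu>1 \<mu>2 in \<open>auto simp: algebra_simps\<close>)
  also have "\<dots> = integral (cbox (0, 0) (real P * l1, real Q * l2)) (grad_sq u)"
    using l1 l2 by (simp add: integral_grid_sum continuous_on_grad_sq u)
  finally show ?thesis .
qed

section \<open>Robin forms and the min-max characterisation\<close>

lemma robin_form_ge_dirichlet:
  assumes u: "C1fun u" and "\<alpha> \<ge> 0"
  shows "integral (cbox (0, 0) (L1, L2)) (grad_sq u) \<le> robin_form_rect L1 L2 \<alpha> u"
proof -
  have u_cont: "continuous_on UNIV u" using u by (rule C1fun_continuous)
  have "integral {0..L1} (\<lambda>t. (u (t, 0))\<^sup>2 + (u (t, L2))\<^sup>2) \<ge> 0"
    by (intro integral_nonneg integrable_continuous_real continuous_intros continuous_on_slice_fst u_cont) auto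
  moreover have "integral {0..L2} (\<lambda>t. (u (0, t))\<^sup>2 + (u (L1, t))\<^sup>2) \<ge> 0"
    by (intro integral_nonneg integrable_continuous_real continuous_intros continuous_on_slice_snd u_cont) auto
  ultimately show ?thesis unfolding robin_form_rect_def using \<open>\<alpha> \<ge> 0\<close> by simp
qed

lemma robin_form_nonneg:
  assumes u: "C1fun u" and "\<alpha> \<ge> 0"
  shows "robin_form_rect L1 L2 \<alpha> u \<ge> 0"
proof -
  have "integral (cbox (0, 0) (L1, L2)) (grad_sq u) \<ge> 0"
    by (intro integral_nonneg integrable_continuous continuous_on_grad_sq u) (auto simp: grad_sq_def)
  then show ?thesis using robin_form_ge_dirichlet[OF assms, of L1 L2] by linarith
qed

lemma l2sq_rect_nonneg:
  assumes "continuous_on UNIV u"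
  shows "l2sq_rect L1 L2 u \<ge> 0"
  unfolding l2sq_rect_def
  by (intro integral_nonneg integrable_continuous continuous_intros continuous_on_subset[OF assms]) auto

lemma l2sq_rect_pos:
  assumes u: "continuous_on UNIV u" and "L1 > 0" "L2 > 0"
    and x: "x \<in> cbox (0, 0) (L1, L2)" and "u x \<noteq> 0"
  shows "l2sq_rect L1 L2 u > 0"
proof -
  have "l2sq_rect L1 L2 u \<noteq> 0"
  proof
    assume "l2sq_rect L1 L2 u = 0"
    moreover have "(\<lambda>x. (u x)\<^sup>2) integrable_on cbox (0, 0) (L1, L2)"
      by (intro integrable_continuous continuous_intros continuous_on_subset[OF u]) auto
    ultimately have "((\<lambda>x. (u x)\<^sup>2) has_integral 0) (cbox (0, 0) (L1, L2))"
      unfolding l2sq_rect_def by (metis has_integral_integral)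
    moreover have "box (0::real, 0::real) (L1, L2) \<noteq> {}"
      using \<open>L1 > 0\<close> \<open>L2 > 0\<close> by (auto simp: box_ne_empty inner_Pair Basis_prod_def)
    ultimately have "(u x)\<^sup>2 = 0"
      by (intro has_integral_0_cbox_imp_0[OF _ _ _ _ x]) (auto intro!: continuous_intros continuous_on_subset[OF u])
    with \<open>u x \<noteq> 0\<close> show False by simp
  qed
  then show ?thesis using l2sq_rect_nonneg[OF u, of L1 L2] by linarith
qed

lemma l2sq_rect_lincomb:
  fixes f :: "nat \<Rightarrow> real \<times> real \<Rightarrow> real"
  assumes "\<And>j. j < k \<Longrightarrow> continuous_on UNIV (f j)"
  shows "l2sq_rect L1 L2 (\<lambda>x. \<Sum>j<k. c j * f j x)
       = (\<Sum>j<k. \<Sum>l<k. c j * c l * integral (cbox (0, 0) (L1, L2)) (\<lambda>x. f j x * f l x))"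
proof -
  have f_cont: "continuous_on S (f j)" if "j \<in> {..<k}" for j S
    using assms that continuous_on_subset by blast
  have "(\<Sum>j<k. c j * f j x)\<^sup>2 = (\<Sum>j<k. \<Sum>l<k. c j * c l * (f j x * f l x))" for x
    by (simp add: power2_eq_square sum_product algebra_simps)
  then have "l2sq_rect L1 L2 (\<lambda>x. \<Sum>j<k. c j * f j x)
      = integral (cbox (0, 0) (L1, L2)) (\<lambda>x. \<Sum>j<k. \<Sum>l<k. c j * c l * (f j x * f l x))"
    by (simp add: l2sq_rect_def)
  also have "\<dots> = (\<Sum>j<k. integral (cbox (0, 0) (L1, L2)) (\<lambda>x. \<Sum>l<k. c j * c l * (f j x * f l x)))"
    by (intro integral_sum integrable_continuous continuous_intros f_cont) auto
  also have "\<dots> = (\<Sum>j<k. \<Sum>l<k. integral (cbox (0, 0) (L1, L2)) (\<lambda>x. c j * c l * (f j x * f l x)))"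
    by (intro sum.cong refl integral_sum integrable_continuous continuous_intros f_cont) auto
  also have "\<dots> = (\<Sum>j<k. \<Sum>l<k. c j * c l * integral (cbox (0, 0) (L1, L2)) (\<lambda>x. f j x * f l x))"
    by simp
  finally show ?thesis .
qed

lemma integral_le_mult_pointwise:
  fixes f g :: "'a::euclidean_space \<Rightarrow> real"
  assumes "f integrable_on S" "g integrable_on S" "\<And>x. x \<in> S \<Longrightarrow> f x \<le> C * g x"
  shows "integral S f \<le> C * integral S g"
proof -
  have "(\<lambda>x. C * g x) integrable_on S" using integrable_on_cmult_left[OF assms(2), of C] by simp
  then show ?thesis using integral_le[OF assms(1) _ assms(3)] by simp
qed


lemma square_lincomb_le:
  fixes c a :: "nat \<Rightarrow> real"
  assumes "\<And>j. j < k \<Longrightarrow> \<bar>c j\<bar> \<le> M"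
  shows "(\<Sum>j<k. c j * a j)\<^sup>2 \<le> M\<^sup>2 * (\<Sum>j<k. \<bar>a j\<bar>)\<^sup>2"
proof -
  have "\<bar>\<Sum>j<k. c j * a j\<bar> \<le> (\<Sum>j<k. \<bar>c j\<bar> * \<bar>a j\<bar>)"
    by (metis (no_types, lifting) abs_mult sum.cong sum_abs)
  also have "\<dots> \<le> (\<Sum>j<k. M * \<bar>a j\<bar>)"
    using assms by (intro sum_mono mult_right_mono) auto
  finally have "\<bar>\<Sum>j<k. c j * a j\<bar>\<^sup>2 \<le> (M * (\<Sum>j<k. \<bar>a j\<bar>))\<^sup>2"
    by (intro power_mono) (auto simp: sum_distrib_left)
  then show ?thesis by (simp add: power_mult_distrib)
qed

lemma grad_sq_lincomb_le:
  fixes f :: "nat \<Rightarrow> real \<times> real \<Rightarrow> real"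
  assumes f: "\<And>j. j < k \<Longrightarrow> C1fun (f j)" and c: "\<And>j. j < k \<Longrightarrow> \<bar>c j\<bar> \<le> M"
  shows "grad_sq (\<lambda>x. \<Sum>j<k. c j * f j x) p
       \<le> M\<^sup>2 * ((\<Sum>j<k. \<bar>frechet_derivative (f j) (at p) (1, 0)\<bar>)\<^sup>2
               + (\<Sum>j<k. \<bar>frechet_derivative (f j) (at p) (0, 1)\<bar>)\<^sup>2)"
proof -
  have "frechet_derivative (\<lambda>x. \<Sum>j<k. c j * f j x) (at p) v
      = (\<Sum>j<k. c j * frechet_derivative (f j) (at p) v)" for v
    by (rule frechet_derivative_lincomb) (simp add: f)
  moreover have "(\<Sum>j<k. c j * frechet_derivative (f j) (at p) v)\<^sup>2
      \<le> M\<^sup>2 * (\<Sum>j<k. \<bar>frechet_derivative (f j) (at p) v\<bar>)\<^sup>2" for v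
    by (rule square_lincomb_le) (simp add: c)
  ultimately show ?thesis
    unfolding grad_sq_def distrib_left by (simp add: add_mono)
qed

lemma robin_form_lincomb_bound:
  fixes f :: "nat \<Rightarrow> real \<times> real \<Rightarrow> real"
  assumes f: "\<And>j. j < k \<Longrightarrow> C1fun (f j)" and "\<alpha> \<ge> 0"
  obtains K where "\<And>c M. \<forall>j<k. \<bar>c j\<bar> \<le> M
    \<Longrightarrow> robin_form_rect L1 L2 \<alpha> (\<lambda>x. \<Sum>j<k. c j * f j x) \<le> M\<^sup>2 * K"
proof -
  define B where "B v p = (\<Sum>j<k. \<bar>v j p\<bar>)\<^sup>2" for v :: "nat \<Rightarrow> real \<times> real \<Rightarrow> real" and p
  define G where "G p = B (\<lambda>j p. frechet_derivative (f j) (at p) (1, 0)) p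
    + B (\<lambda>j p. frechet_derivative (f j) (at p) (0, 1)) p" for p
  have B_cont: "continuous_on S (B v)" if "\<And>j. j < k \<Longrightarrow> continuous_on S (v j)" for v S
    unfolding B_def using that by (intro continuous_intros) auto
  have f_cont: "continuous_on S (B f)" for S
    by (rule B_cont) (simp add: f C1fun_continuous)
  have G_cont: "continuous_on S G" for S
    unfolding G_def by (intro continuous_intros B_cont continuous_on_frechet_derivative f) auto
  show ?thesis
  proof
    fix c :: "nat \<Rightarrow> real" and M assume cM: "\<forall>j<k. \<bar>c j\<bar> \<le> M"
    define u where "u = (\<lambda>x. \<Sum>j<k. c j * f j x)"
    have u: "C1fun u" unfolding u_def by (intro C1fun_lincomb f)
    then have u_cont: "continuous_on UNIV u" by (rule C1fun_continuous)
    have u_le: "(u p)\<^sup>2 \<le> M\<^sup>2 * B f p" for p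
      unfolding u_def B_def by (rule square_lincomb_le) (simp add: cM)
    have "integral (cbox (0, 0) (L1, L2)) (grad_sq u) \<le> M\<^sup>2 * integral (cbox (0, 0) (L1, L2)) G"
      unfolding u_def G_def B_def using f cM
      by (intro integral_le_mult_pointwise integrable_continuous continuous_on_grad_sq C1fun_lincomb
          G_cont[unfolded G_def B_def] grad_sq_lincomb_le) auto
    moreover have "integral {0..L1} (\<lambda>t. (u (t, 0))\<^sup>2 + (u (t, L2))\<^sup>2)
        \<le> M\<^sup>2 * integral {0..L1} (\<lambda>t. B f (t, 0) + B f (t, L2))"
      using u_le by (intro integral_le_mult_pointwise integrable_continuous_real continuous_intros
          continuous_on_slice_fst u_cont f_cont) (simp add: distrib_left add_mono)
    moreover have "integral {0..L2} (\<lambda>t. (u (0, t))\<^sup>2 + (u (L1, t))\<^sup>2)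
        \<le> M\<^sup>2 * integral {0..L2} (\<lambda>t. B f (0, t) + B f (L1, t))"
      using u_le by (intro integral_le_mult_pointwise integrable_continuous_real continuous_intros
          continuous_on_slice_snd u_cont f_cont) (simp add: distrib_left add_mono)
    ultimately have "robin_form_rect L1 L2 \<alpha> u
        \<le> M\<^sup>2 * integral (cbox (0, 0) (L1, L2)) G
          + \<alpha> * (M\<^sup>2 * integral {0..L1} (\<lambda>t. B f (t, 0) + B f (t, L2))
                + M\<^sup>2 * integral {0..L2} (\<lambda>t. B f (0, t) + B f (L1, t)))"
      unfolding robin_form_rect_def using \<open>\<alpha> \<ge> 0\<close> by (intro add_mono mult_left_mono) simp_all
    then show "robin_form_rect L1 L2 \<alpha> (\<lambda>x. \<Sum>j<k. c j * f j x)
        \<le> M\<^sup>2 * (integral (cbox (0, 0) (L1, L2)) G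
          + \<alpha> * (integral {0..L1} (\<lambda>t. B f (t, 0) + B f (t, L2))
                + integral {0..L2} (\<lambda>t. B f (0, t) + B f (L1, t))))"
      by (simp add: u_def algebra_simps)
  qed
qed

definition lincomb :: "(nat \<Rightarrow> nat \<Rightarrow> real \<times> real \<Rightarrow> real) \<Rightarrow> nat \<Rightarrow> (nat \<Rightarrow> real) \<Rightarrow> nat \<Rightarrow> real \<times> real \<Rightarrow> real"
  where "lincomb \<phi> k c i = (\<lambda>x. \<Sum>j<k. c j * \<phi> j i x)"

definition robin_energy ::
    "nat \<Rightarrow> real \<Rightarrow> real \<Rightarrow> real \<Rightarrow> (nat \<Rightarrow> nat \<Rightarrow> real \<times> real \<Rightarrow> real) \<Rightarrow> nat \<Rightarrow> (nat \<Rightarrow> real) \<Rightarrow> real"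
  where "robin_energy m L1 L2 \<alpha> \<phi> k c = (\<Sum>i<m. robin_form_rect L1 L2 \<alpha> (lincomb \<phi> k c i))"

definition l2_mass ::
    "nat \<Rightarrow> real \<Rightarrow> real \<Rightarrow> (nat \<Rightarrow> nat \<Rightarrow> real \<times> real \<Rightarrow> real) \<Rightarrow> nat \<Rightarrow> (nat \<Rightarrow> real) \<Rightarrow> real"
  where "l2_mass m L1 L2 \<phi> k c = (\<Sum>i<m. l2sq_rect L1 L2 (lincomb \<phi> k c i))"

definition admissible_trial :: "nat \<Rightarrow> real \<Rightarrow> real \<Rightarrow> nat \<Rightarrow> (nat \<Rightarrow> nat \<Rightarrow> real \<times> real \<Rightarrow> real) \<Rightarrow> bool"
  where "admissible_trial m L1 L2 k \<phi> \<longleftrightarrow> (\<forall>j<k. \<forall>i<m. C1fun (\<phi> j i)) \<and>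
    (\<forall>c. (\<forall>i<m. \<forall>x\<in>cbox (0, 0) (L1, L2). lincomb \<phi> k c i x = 0) \<longrightarrow> (\<forall>j<k. c j = 0))"

abbreviation rayleigh_sup :: "nat \<Rightarrow> real \<Rightarrow> real \<Rightarrow> real \<Rightarrow> nat \<Rightarrow> (nat \<Rightarrow> nat \<Rightarrow> real \<times> real \<Rightarrow> real) \<Rightarrow> real"
  where "rayleigh_sup m L1 L2 \<alpha> k \<phi> \<equiv>
    SUP c \<in> {c. \<exists>j<k. c j \<noteq> 0}. robin_energy m L1 L2 \<alpha> \<phi> k c / l2_mass m L1 L2 \<phi> k c"

lemma robin_eig_minmax:
  "robin_eig m L1 L2 \<alpha> k = (INF \<phi> \<in> Collect (admissible_trial m L1 L2 k). rayleigh_sup m L1 L2 \<alpha> k \<phi>)"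
  unfolding robin_eig_def admissible_trial_def robin_energy_def l2_mass_def lincomb_def by simp

lemma admissible_trial_C1fun: "admissible_trial m L1 L2 k \<phi> \<Longrightarrow> j < k \<Longrightarrow> i < m \<Longrightarrow> C1fun (\<phi> j i)"
  unfolding admissible_trial_def by blast

lemma C1fun_trial_lincomb: "admissible_trial m L1 L2 k \<phi> \<Longrightarrow> i < m \<Longrightarrow> C1fun (lincomb \<phi> k c i)"
  unfolding lincomb_def by (intro C1fun_lincomb admissible_trial_C1fun) auto

lemma robin_energy_nonneg:
  "admissible_trial m L1 L2 k \<phi> \<Longrightarrow> \<alpha> \<ge> 0 \<Longrightarrow> robin_energy m L1 L2 \<alpha> \<phi> k c \<ge> 0"
  unfolding robin_energy_def by (intro sum_nonneg robin_form_nonneg C1fun_trial_lincomb) auto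

lemma l2_mass_nonneg: "admissible_trial m L1 L2 k \<phi> \<Longrightarrow> l2_mass m L1 L2 \<phi> k c \<ge> 0"
  unfolding l2_mass_def by (intro sum_nonneg l2sq_rect_nonneg C1fun_continuous C1fun_trial_lincomb) auto

lemma l2_mass_pos:
  assumes \<phi>: "admissible_trial m L1 L2 k \<phi>" and "L1 > 0" "L2 > 0" and c: "\<exists>j<k. c j \<noteq> 0"
  shows "l2_mass m L1 L2 \<phi> k c > 0"
proof -
  obtain i x where i: "i < m" and "x \<in> cbox (0, 0) (L1, L2)" and "lincomb \<phi> k c i x \<noteq> 0"
    using \<phi> c unfolding admissible_trial_def by blast
  then have "l2sq_rect L1 L2 (lincomb \<phi> k c i) > 0"
    using \<open>L1 > 0\<close> \<open>L2 > 0\<close> by (intro l2sq_rect_pos C1fun_continuous C1fun_trial_lincomb[OF \<phi>])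
  with i show ?thesis unfolding l2_mass_def
    by (intro sum_pos2[of _ i]) (auto intro!: l2sq_rect_nonneg C1fun_continuous C1fun_trial_lincomb[OF \<phi>])
qed

lemma l2_mass_scale: "l2_mass m L1 L2 \<phi> k (\<lambda>j. c j / M) = l2_mass m L1 L2 \<phi> k c / M\<^sup>2"
proof -
  have "(lincomb \<phi> k (\<lambda>j. c j / M) i x)\<^sup>2 = (lincomb \<phi> k c i x)\<^sup>2 / M\<^sup>2" for i x
    unfolding lincomb_def by (simp add: sum_divide_distrib[symmetric] power_divide)
  then show ?thesis unfolding l2_mass_def l2sq_rect_def by (simp add: sum_divide_distrib)
qed

lemma continuous_on_coordinate [continuous_intros]: "continuous_on S (\<lambda>x. x i)"
  by (rule continuous_on_subset[OF continuous_on_product_coordinates]) simp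

lemma continuous_on_l2_mass:
  assumes \<phi>: "admissible_trial m L1 L2 k \<phi>"
  shows "continuous_on S (l2_mass m L1 L2 \<phi> k)"
proof -
  have "l2_mass m L1 L2 \<phi> k c = (\<Sum>i<m. \<Sum>j<k. \<Sum>l<k. c j * c l * integral (cbox (0, 0) (L1, L2)) (\<lambda>x. \<phi> j i x * \<phi> l i x))"
    for c
    unfolding l2_mass_def lincomb_def
    by (intro sum.cong refl l2sq_rect_lincomb C1fun_continuous admissible_trial_C1fun[OF \<phi>]) auto
  then show ?thesis by (simp add: continuous_intros)
qed

lemma l2_mass_lower_bound:
  assumes \<phi>: "admissible_trial m L1 L2 k \<phi>" and "L1 > 0" "L2 > 0" and "k > 0"
  obtains \<delta> where "\<delta> > 0"
    "\<And>c. (\<forall>j<k. \<bar>c j\<bar> \<le> 1) \<Longrightarrow> (\<exists>j<k. \<bar>c j\<bar> = 1) \<Longrightarrow> \<delta> \<le> l2_mass m L1 L2 \<phi> k c"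
proof -
  define T where "T = PiE UNIV (\<lambda>j. if j < k then {-1..1} else {0::real}) \<inter> (\<Union>j<k. {c. \<bar>c j\<bar> = 1})"
  have "compactin (product_topology (\<lambda>i. euclidean) UNIV) (PiE UNIV (\<lambda>j. if j < k then {-1..1} else {0::real}))"
    by (subst compactin_PiE) auto
  moreover have "closed {c::nat \<Rightarrow> real. \<bar>c j\<bar> = 1}" for j
  proof -
    have "continuous_on UNIV (\<lambda>c::nat \<Rightarrow> real. \<bar>c j\<bar>)" by (intro continuous_intros)
    from closed_Collect_eq[OF this continuous_on_const] show ?thesis .
  qed
  ultimately have "compact T"
    unfolding T_def by (intro compact_Int_closed closed_UN) (auto simp: euclidean_product_topology)
  have "(\<lambda>j. if j = 0 then 1 else 0) \<in> T" using \<open>k > 0\<close> by (auto simp: T_def PiE_iff)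
  then have "T \<noteq> {}" by blast
  obtain c0 where "c0 \<in> T" and c0: "\<forall>c\<in>T. l2_mass m L1 L2 \<phi> k c0 \<le> l2_mass m L1 L2 \<phi> k c"
    using continuous_attains_inf[OF \<open>compact T\<close> \<open>T \<noteq> {}\<close> continuous_on_l2_mass[OF \<phi>]] by blast
  then have "\<exists>j<k. c0 j \<noteq> 0" by (auto simp: T_def)
  then have pos: "l2_mass m L1 L2 \<phi> k c0 > 0" by (rule l2_mass_pos[OF \<phi> \<open>L1 > 0\<close> \<open>L2 > 0\<close>])
  show ?thesis
  proof (rule that[OF pos])
    fix c :: "nat \<Rightarrow> real" assume "\<forall>j<k. \<bar>c j\<bar> \<le> 1" "\<exists>j<k. \<bar>c j\<bar> = 1"
    then have "(\<lambda>j. if j < k then c j else 0) \<in> T" by (auto simp: T_def PiE_iff)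
    moreover have "l2_mass m L1 L2 \<phi> k (\<lambda>j. if j < k then c j else 0) = l2_mass m L1 L2 \<phi> k c"
      unfolding l2_mass_def lincomb_def by simp
    ultimately show "l2_mass m L1 L2 \<phi> k c0 \<le> l2_mass m L1 L2 \<phi> k c" using c0 by auto
  qed
qed

lemma robin_energy_bound:
  assumes \<phi>: "admissible_trial m L1 L2 k \<phi>" and "\<alpha> \<ge> 0"
  obtains K where "\<And>c M. \<forall>j<k. \<bar>c j\<bar> \<le> M \<Longrightarrow> robin_energy m L1 L2 \<alpha> \<phi> k c \<le> M\<^sup>2 * K"
proof -
  have "\<exists>K. \<forall>c M. (\<forall>j<k. \<bar>c j\<bar> \<le> M) \<longrightarrow> robin_form_rect L1 L2 \<alpha> (lincomb \<phi> k c i) \<le> M\<^sup>2 * K"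
    if i: "i < m" for i
  proof -
    obtain K where "\<And>c M. \<forall>j<k. \<bar>c j\<bar> \<le> M
        \<Longrightarrow> robin_form_rect L1 L2 \<alpha> (\<lambda>x. \<Sum>j<k. c j * \<phi> j i x) \<le> M\<^sup>2 * K"
      by (rule robin_form_lincomb_bound[of k "\<lambda>j. \<phi> j i"])
        (use admissible_trial_C1fun[OF \<phi> _ i] \<open>\<alpha> \<ge> 0\<close> in auto)
    then show ?thesis unfolding lincomb_def by blast
  qed
  then have "\<forall>i\<in>{..<m}. \<exists>K. \<forall>c M. (\<forall>j<k. \<bar>c j\<bar> \<le> M)
      \<longrightarrow> robin_form_rect L1 L2 \<alpha> (lincomb \<phi> k c i) \<le> M\<^sup>2 * K"
    by blast
  from bchoice[OF this] obtain K where K: "\<forall>i\<in>{..<m}. \<forall>c M. (\<forall>j<k. \<bar>c j\<bar> \<le> M)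
      \<longrightarrow> robin_form_rect L1 L2 \<alpha> (lincomb \<phi> k c i) \<le> M\<^sup>2 * K i"
    by blast
  show ?thesis
  proof (rule that)
    fix c :: "nat \<Rightarrow> real" and M assume cM: "\<forall>j<k. \<bar>c j\<bar> \<le> M"
    have "robin_form_rect L1 L2 \<alpha> (lincomb \<phi> k c i) \<le> M\<^sup>2 * K i" if "i < m" for i
      using K that cM by blast
    then show "robin_energy m L1 L2 \<alpha> \<phi> k c \<le> M\<^sup>2 * (\<Sum>i<m. K i)"
      unfolding robin_energy_def sum_distrib_left by (intro sum_mono) simp
  qed
qed

lemma rayleigh_bdd_above:
  assumes \<phi>: "admissible_trial m L1 L2 k \<phi>" and "L1 > 0" "L2 > 0" and "\<alpha> \<ge> 0"
  shows "bdd_above ((\<lambda>c. robin_energy m L1 L2 \<alpha> \<phi> k c / l2_mass m L1 L2 \<phi> k c) ` {c. \<exists>j<k. c j \<noteq> 0})"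
proof (cases "k = 0")
  case False
  then have "k > 0" by simp
  obtain \<delta> where "\<delta> > 0" and \<delta>:
    "\<And>c. (\<forall>j<k. \<bar>c j\<bar> \<le> 1) \<Longrightarrow> (\<exists>j<k. \<bar>c j\<bar> = 1) \<Longrightarrow> \<delta> \<le> l2_mass m L1 L2 \<phi> k c"
    using l2_mass_lower_bound[OF \<phi> \<open>L1 > 0\<close> \<open>L2 > 0\<close> \<open>k > 0\<close>] by blast
  obtain K where K: "\<And>c M. \<forall>j<k. \<bar>c j\<bar> \<le> M \<Longrightarrow> robin_energy m L1 L2 \<alpha> \<phi> k c \<le> M\<^sup>2 * K"
    using robin_energy_bound[OF \<phi> \<open>\<alpha> \<ge> 0\<close>] by blast
  show ?thesis
  proof (rule bdd_aboveI2)
    fix c :: "nat \<Rightarrow> real" assume "c \<in> {c. \<exists>j<k. c j \<noteq> 0}"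
    then obtain j1 where "j1 < k" "c j1 \<noteq> 0" by auto
    define M where "M = Max ((\<lambda>j. \<bar>c j\<bar>) ` {..<k})"
    have cM: "\<forall>j<k. \<bar>c j\<bar> \<le> M" unfolding M_def by (auto intro: Max_ge)
    have "0 < \<bar>c j1\<bar>" using \<open>c j1 \<noteq> 0\<close> by simp
    also have "\<dots> \<le> M" using cM \<open>j1 < k\<close> by blast
    finally have "M > 0" .
    have "M \<in> (\<lambda>j. \<bar>c j\<bar>) ` {..<k}" unfolding M_def using \<open>k > 0\<close> by (intro Max_in) auto
    then obtain j0 where "j0 < k" "\<bar>c j0\<bar> = M" by auto
    have "M\<^sup>2 * \<delta> \<le> l2_mass m L1 L2 \<phi> k c"
    proof -
      have "\<delta> \<le> l2_mass m L1 L2 \<phi> k (\<lambda>j. c j / M)"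
        using \<open>M > 0\<close> cM \<open>j0 < k\<close> \<open>\<bar>c j0\<bar> = M\<close> by (intro \<delta>) (auto simp: abs_divide)
      then show ?thesis using \<open>M > 0\<close> by (simp add: l2_mass_scale field_simps)
    qed
    moreover have "robin_energy m L1 L2 \<alpha> \<phi> k c \<le> M\<^sup>2 * \<bar>K\<bar>"
      using K[OF cM] mult_left_mono[OF abs_ge_self, of "M\<^sup>2" K] by simp
    ultimately have "robin_energy m L1 L2 \<alpha> \<phi> k c / l2_mass m L1 L2 \<phi> k c \<le> (M\<^sup>2 * \<bar>K\<bar>) / (M\<^sup>2 * \<delta>)"
      using robin_energy_nonneg[OF \<phi> \<open>\<alpha> \<ge> 0\<close>] \<open>M > 0\<close> \<open>\<delta> > 0\<close> by (intro frac_le) auto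
    then show "robin_energy m L1 L2 \<alpha> \<phi> k c / l2_mass m L1 L2 \<phi> k c \<le> \<bar>K\<bar> / \<delta>"
      using \<open>M > 0\<close> by simp
  qed
qed simp

lemma rayleigh_sup_nonneg:
  assumes \<phi>: "admissible_trial m L1 L2 k \<phi>" and "L1 > 0" "L2 > 0" and "\<alpha> \<ge> 0" and "k > 0"
  shows "rayleigh_sup m L1 L2 \<alpha> k \<phi> \<ge> 0"
proof (rule cSUP_upper2[OF rayleigh_bdd_above[OF assms(1-4)]])
  show "(\<lambda>j. 1) \<in> {c. \<exists>j<k. c j \<noteq> (0::real)}" using \<open>k > 0\<close> by auto
  show "0 \<le> robin_energy m L1 L2 \<alpha> \<phi> k (\<lambda>j. 1) / l2_mass m L1 L2 \<phi> k (\<lambda>j. 1)"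
    using robin_energy_nonneg[OF \<phi> \<open>\<alpha> \<ge> 0\<close>] l2_mass_nonneg[OF \<phi>] by simp
qed

lemma robin_eig_le_rayleigh_sup:
  assumes \<phi>: "admissible_trial m L1 L2 k \<phi>" and "L1 > 0" "L2 > 0" and "\<alpha> \<ge> 0" and "k > 0"
  shows "robin_eig m L1 L2 \<alpha> k \<le> rayleigh_sup m L1 L2 \<alpha> k \<phi>"
  unfolding robin_eig_minmax
  using \<phi> rayleigh_sup_nonneg[OF _ assms(2-5)] by (intro cINF_lower bdd_belowI2[of _ 0]) auto

lemma robin_eig_ge:
  assumes "L1 > 0" "L2 > 0" "\<alpha> \<ge> 0" and "Collect (admissible_trial m L1 L2 k) \<noteq> {}"
    and test: "\<And>\<phi>. admissible_trial m L1 L2 k \<phi>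
      \<Longrightarrow> \<exists>c. (\<exists>j<k. c j \<noteq> 0) \<and> \<mu> * l2_mass m L1 L2 \<phi> k c \<le> robin_energy m L1 L2 \<alpha> \<phi> k c"
  shows "\<mu> \<le> robin_eig m L1 L2 \<alpha> k"
  unfolding robin_eig_minmax
proof (rule cINF_greatest)
  fix \<phi> assume "\<phi> \<in> Collect (admissible_trial m L1 L2 k)"
  then have \<phi>: "admissible_trial m L1 L2 k \<phi>" by simp
  obtain c where c: "\<exists>j<k. c j \<noteq> 0" and "\<mu> * l2_mass m L1 L2 \<phi> k c \<le> robin_energy m L1 L2 \<alpha> \<phi> k c"
    using test[OF \<phi>] by blast
  moreover have "l2_mass m L1 L2 \<phi> k c > 0" using l2_mass_pos[OF \<phi> assms(1,2) c] .
  ultimately have "\<mu> \<le> robin_energy m L1 L2 \<alpha> \<phi> k c / l2_mass m L1 L2 \<phi> k c"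
    by (simp add: pos_le_divide_eq)
  then show "\<mu> \<le> rayleigh_sup m L1 L2 \<alpha> k \<phi>"
    using c by (intro cSUP_upper2[OF rayleigh_bdd_above[OF \<phi> assms(1-3)]]) auto
qed fact

section \<open>Eigenvalue bounds\<close>

lemma grad_sq_const: "grad_sq (\<lambda>x. a) = (\<lambda>p. 0)"
proof
  fix p :: "real \<times> real"
  have "frechet_derivative (\<lambda>x::real \<times> real. a) (at p) = (\<lambda>h. 0)"
    by (rule frechet_derivative_at[symmetric]) (rule has_derivative_const)
  then show "grad_sq (\<lambda>x. a) p = 0" by (simp add: grad_sq_def)
qed

lemma robin_form_rect_const:
  "L1 \<ge> 0 \<Longrightarrow> L2 \<ge> 0 \<Longrightarrow> robin_form_rect L1 L2 \<alpha> (\<lambda>x. a) = 2 * \<alpha> * (L1 + L2) * a\<^sup>2"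
  by (simp add: robin_form_rect_def grad_sq_const algebra_simps)

lemma l2sq_rect_const: "L1 \<ge> 0 \<Longrightarrow> L2 \<ge> 0 \<Longrightarrow> l2sq_rect L1 L2 (\<lambda>x. a) = L1 * L2 * a\<^sup>2"
  by (simp add: l2sq_rect_def content_Pair)

lemma robin_eig_squares_le:
  assumes "n > 0" and "s > 0" and "\<alpha> \<ge> 0"
  shows "robin_eig n s s \<alpha> n \<le> 4 * \<alpha> / s"
proof -
  define \<phi> :: "nat \<Rightarrow> nat \<Rightarrow> real \<times> real \<Rightarrow> real" where "\<phi> j i = (\<lambda>x. if i = j then 1 else 0)" for j i
  have lincomb: "lincomb \<phi> n c i = (\<lambda>x. c i)" if "i < n" for c i
    using that by (simp add: lincomb_def \<phi>_def if_distrib cong: if_cong)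
  have \<phi>: "admissible_trial n s s n \<phi>"
    unfolding admissible_trial_def
  proof (intro conjI allI impI)
    show "C1fun (\<phi> j i)" for j i unfolding \<phi>_def by (rule C1fun_const)
    fix c :: "nat \<Rightarrow> real" and j
    assume "\<forall>i<n. \<forall>x\<in>cbox (0, 0) (s, s). lincomb \<phi> n c i x = 0" and "j < n"
    moreover have "(0, 0) \<in> cbox (0, 0) (s, s)" using \<open>s > 0\<close> by (auto simp: cbox_Pair_iff)
    ultimately show "c j = 0" using lincomb by metis
  qed
  have "robin_energy n s s \<alpha> \<phi> n c / l2_mass n s s \<phi> n c = 4 * \<alpha> / s"
    if "\<exists>j<n. c j \<noteq> 0" for c
  proof -
    have "(\<Sum>i<n. (c i)\<^sup>2) > 0" using that by (auto intro: sum_pos2)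
    moreover have "robin_energy n s s \<alpha> \<phi> n c = 4 * \<alpha> * s * (\<Sum>i<n. (c i)\<^sup>2)"
      using \<open>s > 0\<close> by (simp add: robin_energy_def lincomb robin_form_rect_const sum_distrib_left mult.assoc)
    moreover have "l2_mass n s s \<phi> n c = s * s * (\<Sum>i<n. (c i)\<^sup>2)"
      using \<open>s > 0\<close> by (simp add: l2_mass_def lincomb l2sq_rect_const sum_distrib_left)
    ultimately show ?thesis using \<open>s > 0\<close> by simp
  qed
  then have "rayleigh_sup n s s \<alpha> n \<phi> = 4 * \<alpha> / s"
    using \<open>n > 0\<close> by (subst SUP_cong[OF refl, of _ _ "\<lambda>_. 4 * \<alpha> / s"]) (auto intro!: cSUP_const)
  then show ?thesis using robin_eig_le_rayleigh_sup[OF \<phi> \<open>s > 0\<close> \<open>s > 0\<close> \<open>\<alpha> \<ge> 0\<close> \<open>n > 0\<close>] by simp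
qed

lemma homogeneous_system_nontrivial_solution:
  fixes a :: "nat \<Rightarrow> nat \<Rightarrow> real"
  assumes "finite J" and "card J > N"
  shows "\<exists>c. (\<exists>j\<in>J. c j \<noteq> 0) \<and> (\<forall>r<N. (\<Sum>j\<in>J. a r j * c j) = 0)"
  using assms
proof (induction N arbitrary: J a)
  case 0
  then obtain j0 where "j0 \<in> J" by fastforce
  then show ?case by (intro exI[of _ "\<lambda>j. if j = j0 then 1 else 0"]) auto
next
  case (Suc N)
  show ?case
  proof (cases "\<forall>j\<in>J. a N j = 0")
    case True
    then show ?thesis using Suc.IH[of J a] Suc.prems by (auto simp: less_Suc_eq)
  next
    case False
    \<comment> \<open>Gaussian elimination: the equation \<open>N\<close> determines \<open>c j0\<close> in terms of the other unknowns.\<close>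
    then obtain j0 where j0: "j0 \<in> J" "a N j0 \<noteq> 0" by auto
    define a' where "a' r j = a r j - a r j0 * a N j / a N j0" for r j
    have "card (J - {j0}) > N" using Suc.prems j0 by (simp add: card_Diff_singleton)
    then obtain c' where c': "\<exists>j\<in>J - {j0}. c' j \<noteq> 0" "\<forall>r<N. (\<Sum>j\<in>J - {j0}. a' r j * c' j) = 0"
      using Suc.IH[of "J - {j0}" a'] Suc.prems by auto
    define c where "c = c'(j0 := - (\<Sum>j\<in>J - {j0}. a N j * c' j) / a N j0)"
    have split: "(\<Sum>j\<in>J. a r j * c j) = a r j0 * c j0 + (\<Sum>j\<in>J - {j0}. a r j * c' j)" for r
    proof -
      have "(\<Sum>j\<in>J - {j0}. a r j * c j) = (\<Sum>j\<in>J - {j0}. a r j * c' j)"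
        by (intro sum.cong) (auto simp: c_def)
      then show ?thesis using Suc.prems j0 by (simp add: sum.remove)
    qed
    have "(\<Sum>j\<in>J. a r j * c j) = 0" if "r < Suc N" for r
    proof (cases "r = N")
      case False
      with that have "(\<Sum>j\<in>J - {j0}. a r j * c' j) = a r j0 / a N j0 * (\<Sum>j\<in>J - {j0}. a N j * c' j)"
        using c'(2) by (simp add: a'_def algebra_simps sum_subtractf sum_distrib_left)
      then show ?thesis using split[of r] j0 by (simp add: c_def)
    qed (use split[of N] j0 in \<open>simp add: c_def\<close>)
    moreover have "\<exists>j\<in>J. c j \<noteq> 0" using c'(1) by (auto simp: c_def)
    ultimately show ?thesis by blast
  qed
qed

lemma admissible_trial_monomials:
  assumes "L1 > 0" and "L2 \<ge> 0"
  shows "admissible_trial 1 L1 L2 k (\<lambda>j i x. (fst x) ^ j)"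
  unfolding admissible_trial_def
proof (intro conjI allI impI)
  show "C1fun (\<lambda>x. fst x ^ j)" for j by (rule C1fun_fst_power)
  fix c :: "nat \<Rightarrow> real" and j
  assume vanish: "\<forall>i<1. \<forall>x\<in>cbox (0, 0) (L1, L2). lincomb (\<lambda>j i x. fst x ^ j) k c i x = 0" and "j < k"
  show "c j = 0"
  proof (rule ccontr)
    assume "c j \<noteq> 0"
    \<comment> \<open>a nonzero polynomial has finitely many roots, but this one vanishes on \<open>[0, L1]\<close>\<close>
    have "{..<k} = {..k - 1}" using \<open>j < k\<close> by auto
    then have "finite {t. (\<Sum>i\<le>k - 1. c i * t ^ i) = 0}"
      using \<open>j < k\<close> \<open>c j \<noteq> 0\<close> by (subst polyfun_finite_roots) auto
    moreover have "{0..L1} \<subseteq> {t. (\<Sum>i\<le>k - 1. c i * t ^ i) = 0}"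
    proof
      fix t assume "t \<in> {0..L1}"
      then have "(t, 0) \<in> cbox (0, 0) (L1, L2)" using \<open>L2 \<ge> 0\<close> by (auto simp: cbox_Pair_iff)
      with vanish have "lincomb (\<lambda>j i x. fst x ^ j) k c 0 (t, 0) = 0" by blast
      then show "t \<in> {t. (\<Sum>i\<le>k - 1. c i * t ^ i) = 0}"
        using \<open>{..<k} = {..k - 1}\<close> by (simp add: lincomb_def)
    qed
    ultimately show False using \<open>L1 > 0\<close> infinite_Icc[of 0 L1] finite_subset by blast
  qed
qed

lemma robin_eig_rect_ge_grid:
  fixes P Q :: nat
  assumes "L1 > 0" "L2 > 0" "\<alpha> \<ge> 0" and "P > 0" "Q > 0" and "P * Q < k"
    and \<mu>1: "\<mu> \<le> (pi * P / L1)\<^sup>2" and \<mu>2: "\<mu> \<le> (pi * Q / L2)\<^sup>2"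
  shows "\<mu> \<le> robin_eig 1 L1 L2 \<alpha> k"
proof (rule robin_eig_ge)
  show "Collect (admissible_trial 1 L1 L2 k) \<noteq> {}"
    using admissible_trial_monomials[of L1 L2 k] assms by auto
  fix \<phi> assume \<phi>: "admissible_trial 1 L1 L2 k \<phi>"
  define l1 l2 where "l1 = L1 / P" and "l2 = L2 / Q"
  have "l1 > 0" "l2 > 0" and L: "L1 = real P * l1" "L2 = real Q * l2"
    using assms by (auto simp: l1_def l2_def)
  define A where "A r j = integral (grid_cell l1 l2 (r div Q) (r mod Q)) (\<phi> j 0)" for r j
  obtain c where "\<exists>j\<in>{..<k}. c j \<noteq> 0" and c: "\<forall>r<P * Q. (\<Sum>j\<in>{..<k}. A r j * c j) = 0"
    using homogeneous_system_nontrivial_solution[of "{..<k}" "P * Q" A] \<open>P * Q < k\<close> by auto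
  then have "\<exists>j<k. c j \<noteq> 0" by blast
  have u: "C1fun (lincomb \<phi> k c 0)" by (rule C1fun_trial_lincomb[OF \<phi>]) simp
  have \<phi>_cont: "continuous_on S (\<phi> j 0)" if "j < k" for j S
    using admissible_trial_C1fun[OF \<phi> that] by (simp add: C1fun_continuous)
  have "integral (grid_cell l1 l2 p q) (lincomb \<phi> k c 0) = 0" if "p < P" "q < Q" for p q
  proof -
    have "p * Q + q < Suc p * Q" using \<open>q < Q\<close> by simp
    also have "\<dots> \<le> P * Q" using \<open>p < P\<close> by (intro mult_right_mono) auto
    moreover have "integral (grid_cell l1 l2 p q) (lincomb \<phi> k c 0) = (\<Sum>j<k. A (p * Q + q) j * c j)"
      unfolding lincomb_def A_def grid_cell_def using \<open>q < Q\<close>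
      by (subst integral_sum)
        (auto intro!: integrable_continuous continuous_intros \<phi>_cont simp: mult.commute)
    ultimately show ?thesis using c by simp
  qed
  then have "\<mu> * integral (cbox (0, 0) (L1, L2)) (\<lambda>x. (lincomb \<phi> k c 0 x)\<^sup>2)
      \<le> integral (cbox (0, 0) (L1, L2)) (grad_sq (lincomb \<phi> k c 0))"
    unfolding L using \<mu>1 \<mu>2 \<open>l1 > 0\<close> \<open>l2 > 0\<close>
    by (intro neumann_poincare_grid[OF u]) (auto simp: l1_def l2_def)
  also have "\<dots> \<le> robin_form_rect L1 L2 \<alpha> (lincomb \<phi> k c 0)"
    by (rule robin_form_ge_dirichlet[OF u \<open>\<alpha> \<ge> 0\<close>])
  finally show "\<exists>c. (\<exists>j<k. c j \<noteq> 0) \<and> \<mu> * l2_mass 1 L1 L2 \<phi> k c \<le> robin_energy 1 L1 L2 \<alpha> \<phi> k c"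
    using \<open>\<exists>j<k. c j \<noteq> 0\<close> by (auto simp: l2_mass_def robin_energy_def l2sq_rect_def)
qed (use assms in auto)

lemma robin_eig_rect_ge:
  assumes "L1 > 0" "L2 > 0" "\<alpha> \<ge> 0" "r > 0"
    and count: "(L1 * r / pi + 1) * (L2 * r / pi + 1) \<le> real k"
  shows "r\<^sup>2 \<le> robin_eig 1 L1 L2 \<alpha> k"
proof -
  define P Q where "P = nat \<lceil>L1 * r / pi\<rceil>" and "Q = nat \<lceil>L2 * r / pi\<rceil>"
  have "L1 * r / pi > 0" "L2 * r / pi > 0" using assms by auto
  then have P: "L1 * r / pi \<le> P" "P < L1 * r / pi + 1" "P > 0"
    and Q: "L2 * r / pi \<le> Q" "Q < L2 * r / pi + 1" "Q > 0"
    unfolding P_def Q_def by linarith+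
  have "real (P * Q) < real k"
    using P Q count mult_strict_mono[of P "L1 * r / pi + 1" Q "L2 * r / pi + 1"] by simp
  then have "P * Q < k" by (simp only: of_nat_less_iff)
  moreover have "r \<le> pi * P / L1" "r \<le> pi * Q / L2"
    using P Q assms by (simp_all add: field_simps)
  then have "r\<^sup>2 \<le> (pi * P / L1)\<^sup>2" "r\<^sup>2 \<le> (pi * Q / L2)\<^sup>2"
    using \<open>r > 0\<close> by (auto intro: power_mono)
  ultimately show ?thesis using assms P Q by (intro robin_eig_rect_ge_grid) auto
qed

lemma add_inverse_mono:
  fixes a b :: real
  assumes "1 \<le> a" and "a \<le> b"
  shows "a + 1 / a \<le> b + 1 / b"
proof -
  have "1 \<le> a * b" using assms mult_mono[of 1 a 1 b] by simp
  then have "0 \<le> (b - a) * (1 - 1 / (a * b))" using assms by (intro mult_nonneg_nonneg) auto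
  also have "\<dots> = b + 1 / b - (a + 1 / a)" using assms by (simp add: field_simps)
  finally show ?thesis by simp
qed

lemma powr_quarter: "0 \<le> x \<Longrightarrow> x powr (1/4) = sqrt (sqrt x)"
  by (simp add: powr_half_sqrt[symmetric] powr_powr)

theorem lemma7p3:
  fixes A \<alpha> a :: real and k :: nat
  assumes "A > 0" and "\<alpha> > 0" and "k \<ge> 3"
    and "4 * A powr (1/2) * real k powr (1/2) * \<alpha> / pi\<^sup>2
         + 2 * A powr (1/4) * real k powr (1/4) * \<alpha> powr (1/2) / pi
             * (real k powr (1/2) + real k powr (-1/2)) + 1 \<le> real k"
    and "1 \<le> a" and "a \<le> real k powr (1/2)"
  shows "robin_eig_rect A a \<alpha> k \<ge> robin_eig_squares A k \<alpha> k"
proof -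
  define X where "X = 2 * sqrt (sqrt A) * sqrt (sqrt k) * sqrt \<alpha> / pi"
  define r where "r = pi * X / sqrt A"
  have "X > 0" "r > 0" using assms by (simp_all add: X_def r_def)
  have hyp: "X\<^sup>2 + X * (sqrt k + 1 / sqrt k) + 1 \<le> real k"
    using assms(4) \<open>A > 0\<close> \<open>\<alpha> > 0\<close>
    by (simp add: X_def powr_half_sqrt powr_quarter powr_minus_divide power_mult_distrib power_divide)
  have "(sqrt A * a * r / pi + 1) * (sqrt A / a * r / pi + 1) = X\<^sup>2 + X * (a + 1 / a) + 1"
    using \<open>A > 0\<close> \<open>1 \<le> a\<close> by (simp add: r_def field_simps power2_eq_square)
  also have "\<dots> \<le> X\<^sup>2 + X * (sqrt k + 1 / sqrt k) + 1"
    using add_inverse_mono[OF \<open>1 \<le> a\<close>] assms(6) \<open>X > 0\<close> by (simp add: powr_half_sqrt)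
  finally have "r\<^sup>2 \<le> robin_eig_rect A a \<alpha> k"
    unfolding robin_eig_rect_def using hyp assms \<open>r > 0\<close> by (intro robin_eig_rect_ge) auto
  moreover have "robin_eig_squares A k \<alpha> k \<le> 4 * \<alpha> / sqrt (A / k)"
    unfolding robin_eig_squares_def using assms by (intro robin_eig_squares_le) auto
  moreover have "4 * \<alpha> / sqrt (A / k) = r\<^sup>2"
    using \<open>A > 0\<close> \<open>\<alpha> > 0\<close>
    by (simp add: r_def X_def real_sqrt_divide power_mult_distrib power_divide field_simps)
  ultimately show ?thesis by simp
qed

end
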